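(* Let $M>2$, $p_M=\frac{M+2}{M-2}$, $m\ge2$, and for $p\in(1,p_M)$ let $v_p$ be the unique solution in $H^1_{0,M}$ of $-(t^{M-1}v')'=t^{M-1}|v|^{p-1}v$ on $(0,1)$, $v'(0)=0$, $v(1)=0$, with exactly $m$ nodal zones and $v_p(0)>0$. Fix $i\in\{1,\dots,m-1\}$ and let $w_{i,p}(r)=t_{i,p}^{2/(p-1)}v_p(t_{i,p}r)$ for $0\le r\le 1/t_{i,p}$. Assume that for a sequence $p_n\to p_M$, \[ \frac{s_{i-1,p_n}}{t_{i,p_n}}\to0\quad\text{and}\quad t_{i,p_n}\widetilde{\mathcal M}_{i-1,p_n}\to+\infty . \] Then $w_{i,p_n}\to0$ uniformly on $[1-\delta,1]$ for every $0<\delta<1$.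
   Context: $H^1_{0,M}$: measurable $v$ on $(0,1)$ with $\int_0^1t^{M-1}(v^2+|v'|^2)<\infty$, $v(1)=0$. $0=t_{0,p}<t_{1,p}<\dots<t_{m,p}=1$ are $0$ and the zeros of $v_p$; $s_{k,p}$ is the unique critical point of $v_p$ in $(t_{k,p},t_{k+1,p})$ with $s_{0,p}=0$; $\mathcal M_{k,p}=|v_p(s_{k,p})|$, $\widetilde{\mathcal M}_{k,p}=\mathcal M_{k,p}^{(p-1)/2}$. *)

theory Defs
  imports "HOL-Analysis.Analysis"
begin

text \<open>Classical radial solution of  -(t^(M-1) v')' = t^(M-1) |v|^(p-1) v  on (0,1),
  v'(0) = 0, v(1) = 0, with v in H^1_{0,M} (weighted integrability of v^2 + v'^2).\<close>
definition radial_sol :: "real \<Rightarrow> real \<Rightarrow> (real \<Rightarrow> real) \<Rightarrow> bool" where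
  "radial_sol M p v \<longleftrightarrow>
     (\<exists>v'. (\<forall>t\<in>{0..1}. (v has_real_derivative v' t) (at t within {0..1}))
        \<and> v' 0 = 0 \<and> v 1 = 0
        \<and> set_integrable lborel {0<..<1} (\<lambda>t. t powr (M - 1) * ((v t)\<^sup>2 + (v' t)\<^sup>2))
        \<and> (\<forall>t\<in>{0<..<1}. ((\<lambda>s. s powr (M - 1) * v' s) has_real_derivative
               - (t powr (M - 1) * (\<bar>v t\<bar> powr (p - 1) * v t))) (at t)))"

definition zeros01 :: "(real \<Rightarrow> real) \<Rightarrow> real set" where
  "zeros01 v = {t \<in> {0<..1}. v t = 0}"

text \<open>v has exactly m nodal zones: the zeros 0 < t_1 < ... < t_m = 1 in (0,1] are m in number,
  so the nodal zones are (t_0,t_1), ..., (t_(m-1),t_m) with t_0 = 0.\<close>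
definition nodal_zones :: "(real \<Rightarrow> real) \<Rightarrow> nat \<Rightarrow> bool" where
  "nodal_zones v m \<longleftrightarrow> finite (zeros01 v) \<and> card (zeros01 v) = m"

definition tz :: "(real \<Rightarrow> real) \<Rightarrow> nat \<Rightarrow> real" where
  "tz v k = sorted_list_of_set (insert 0 (zeros01 v)) ! k"

definition crit :: "(real \<Rightarrow> real) \<Rightarrow> nat \<Rightarrow> real" where
  "crit v k = (if k = 0 then 0
     else (THE s. tz v k < s \<and> s < tz v (Suc k) \<and> deriv v s = 0))"

definition Mtil :: "real \<Rightarrow> (real \<Rightarrow> real) \<Rightarrow> nat \<Rightarrow> real" where
  "Mtil p v k = \<bar>v (crit v k)\<bar> powr ((p - 1) / 2)"

definition wres :: "real \<Rightarrow> (real \<Rightarrow> real) \<Rightarrow> nat \<Rightarrow> real \<Rightarrow> real" where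
  "wres p v i r = tz v i powr (2 / (p - 1)) * v (tz v i * r)"

end

theory Submission
  imports Defs
begin

text \<open>
  With \<kappa> = 2/(p-1) and s = ln r, the Emden-Fowler transform y(r) = r^\<kappa> v(r) solves
  y'' = \<alpha> y' + \<beta> y - |y|^(p-1) y (primes denoting d/ds), where \<alpha> = 2\<kappa> + 2 - M is positive for
  p < p_M and vanishes at p = p_M, and \<beta> = \<kappa>(M - 2 - \<kappa>) \<le> (M-2)^2/4. The energy
  H = y'^2/2 - \<beta> y^2/2 + |y|^(p+1)/(p+1) satisfies H' = \<alpha> y'^2 and H(0) = 0. On a nodal zone y
  rises to a single extremum and falls back, so H gains at most 2 \<alpha> sup|y'| sup|y| there; as H
  bounds sup|y'| and sup|y|, after i zones H(t_i) \<le> i \<alpha> (C H(t_i) + C'), so H(t_i) = O(\<alpha>) \<rightarrow> 0.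
  A Gronwall argument on [r, t_i] gives y(r)^2 \<le> 2 H(t_i) (t_i/r)^k, and w_{i,p}(s) = s^(-\<kappa>) y(t_i s).
\<close>

lemma has_real_derivative_abs_powr:
  fixes q x :: real
  assumes q: "q > 0"
  shows "((\<lambda>x. \<bar>x\<bar> powr (q + 1)) has_real_derivative (q + 1) * (\<bar>x\<bar> powr (q - 1) * x)) (at x)"
proof (cases "x = 0")
  case True
  have "((\<lambda>h. (\<bar>0 + h\<bar> powr (q + 1) - \<bar>0\<bar> powr (q + 1)) / h) \<longlongrightarrow> 0) (at 0)"
  proof (rule Lim_null_comparison)
    show "\<forall>\<^sub>F h in at 0. norm ((\<bar>0 + h\<bar> powr (q + 1) - \<bar>0\<bar> powr (q + 1)) / h) \<le> \<bar>h\<bar> powr q"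
      by (rule always_eventually) (simp add: powr_add abs_mult)
    show "((\<lambda>h. \<bar>h\<bar> powr q) \<longlongrightarrow> 0) (at 0)"
      using q by (intro tendsto_zero_powrI tendsto_rabs_zero tendsto_ident_at) auto
  qed
  then show ?thesis using True by (simp add: DERIV_def)
next
  case False
  have sgn: "\<bar>z\<bar> powr (q - 1) * z = sgn z * \<bar>z\<bar> powr q" if "z \<noteq> 0" for z :: real
    using that by (simp add: powr_diff sgn_if)
  have "((\<lambda>z. (sgn x * z) powr (q + 1)) has_real_derivative
          (q + 1) * (sgn x * x) powr q * sgn x) (at x)"
    using False by (auto intro!: derivative_eq_intros simp: sgn_if)
  moreover have "open {z. 0 < sgn x * z}"
    by (intro open_Collect_less continuous_intros)
  ultimately have "((\<lambda>z. \<bar>z\<bar> powr (q + 1)) has_real_derivative (q + 1) * (sgn x * x) powr q * sgn x) (at x)"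
    by (rule has_field_derivative_transform_within_open) (use False in \<open>auto simp: sgn_if\<close>)
  moreover have "sgn x * x = \<bar>x\<bar>"
    by (simp add: abs_sgn mult.commute)
  ultimately show ?thesis
    using sgn[OF False] by (simp add: mult.commute mult.left_commute)
qed

lemma MVT_interior:
  fixes f f' :: "real \<Rightarrow> real"
  assumes "a < b" "continuous_on {a..b} f"
    and "\<And>x. a < x \<Longrightarrow> x < b \<Longrightarrow> (f has_real_derivative f' x) (at x)"
  shows "\<exists>z. a < z \<and> z < b \<and> f b - f a = (b - a) * f' z"
proof -
  obtain l z where "a < z" "z < b" "(f has_real_derivative l) (at z)" "f b - f a = (b - a) * l"
    using MVT[OF assms(1,2)] assms(3) real_differentiable_def by blast
  then show ?thesis
    using assms(3) DERIV_unique by blast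
qed

lemma continuous_on_nonzero_sign_cases:
  fixes f :: "real \<Rightarrow> real"
  assumes cont: "continuous_on {a..b} f" and nz: "\<forall>x\<in>{a<..<b}. f x \<noteq> 0"
  shows "(\<forall>x\<in>{a<..<b}. f x > 0) \<or> (\<forall>x\<in>{a<..<b}. f x < 0)"
proof (rule ccontr)
  assume "\<not> ?thesis"
  then obtain x1 x2 where x: "x1 \<in> {a<..<b}" "x2 \<in> {a<..<b}" "f x1 < 0" "f x2 > 0"
    using nz by (metis linorder_neqE_linordered_idom)
  obtain z where "min x1 x2 \<le> z" "z \<le> max x1 x2" "f z = 0"
  proof (cases "x1 \<le> x2")
    case True
    then show ?thesis
      using IVT'[of f x1 0 x2] x continuous_on_subset[OF cont] that by force
  next
    case False
    then show ?thesis
      using IVT2'[of f x1 0 x2] x continuous_on_subset[OF cont] that by force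
  qed
  moreover have "z \<in> {a<..<b}"
    using x calculation(1,2) by (auto simp: min_def max_def split: if_splits)
  ultimately show False
    using nz by auto
qed

lemma stepwise_less_imp_less:
  fixes t :: "nat \<Rightarrow> 'a::order"
  assumes step: "\<forall>k<i. t k < t (Suc k)"
  shows "k < k' \<Longrightarrow> k' \<le> i \<Longrightarrow> t k < t k'"
proof (induction k')
  case (Suc n)
  then show ?case
    using step by (cases "k = n") (auto intro: order.strict_trans)
qed simp

lemma sq_le_of_potential_le:
  fixes Y b h q :: real
  assumes q: "q > 1" and b: "b \<ge> 0" and h: "h \<ge> 0" and Y: "Y \<ge> 0"
    and pot: "Y powr (q + 1) / (q + 1) - b * Y\<^sup>2 / 2 \<le> h"
  shows "Y\<^sup>2 \<le> h + ((q + 1) * (b + 1)) powr (2 / (q - 1))"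
proof (cases "Y powr (q - 1) \<ge> (q + 1) * (b + 1)")
  case True
  have "Y powr (q + 1) = Y powr (q - 1) * Y\<^sup>2"
    using Y powr_add[of Y "q - 1" 2] by (cases "Y = 0") (simp_all add: add.commute)
  moreover have "(q + 1) * ((b + 1) * Y\<^sup>2) \<le> Y powr (q - 1) * Y\<^sup>2"
    using mult_right_mono[OF True, of "Y\<^sup>2"] by (simp add: mult.assoc)
  ultimately have "(b + 1) * Y\<^sup>2 \<le> Y powr (q + 1) / (q + 1)"
    using q by (simp add: pos_le_divide_eq mult.commute)
  moreover have "b * Y\<^sup>2 \<ge> 0"
    using b by simp
  ultimately have "Y\<^sup>2 \<le> h"
    using pot by (simp add: distrib_right)
  then show ?thesis
    by (simp add: add_increasing2)
next
  case False
  have "Y = (Y powr (q - 1)) powr (1 / (q - 1))"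
    using Y q by (simp add: powr_powr)
  also have "\<dots> \<le> ((q + 1) * (b + 1)) powr (1 / (q - 1))"
    using False q by (intro powr_mono2) auto
  finally have "Y\<^sup>2 \<le> (((q + 1) * (b + 1)) powr (1 / (q - 1)))\<^sup>2"
    using Y by (intro power_mono) auto
  also have "\<dots> = ((q + 1) * (b + 1)) powr (2 / (q - 1))"
    by (simp add: powr_powr[symmetric] powr_realpow[symmetric] power2_eq_square powr_add[symmetric])
  finally show ?thesis using h by linarith
qed

lemma continuous_on_Icc_abs_bounded:
  fixes f :: "real \<Rightarrow> real"
  assumes "continuous_on {a..b} f"
  obtains B where "\<forall>x\<in>{a..b}. \<bar>f x\<bar> \<le> B"
proof -
  have "compact (f ` {a..b})"
    by (intro compact_continuous_image assms compact_Icc)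
  then obtain B where "\<forall>z\<in>f ` {a..b}. norm z \<le> B"
    using compact_imp_bounded bounded_iff by blast
  then show ?thesis
    using that by auto
qed

lemma uniform_limit_zero_of_sq_le:
  fixes f :: "nat \<Rightarrow> 'a \<Rightarrow> real"
  assumes bound: "\<forall>\<^sub>F n in sequentially. \<forall>x\<in>S. (f n x)\<^sup>2 \<le> B n" and B: "B \<longlonglongrightarrow> 0"
  shows "uniform_limit S f (\<lambda>x. 0) sequentially"
  unfolding uniform_limit_iff
proof (intro allI impI)
  fix \<epsilon> :: real assume \<epsilon>: "\<epsilon> > 0"
  have "\<forall>\<^sub>F n in sequentially. B n < \<epsilon>\<^sup>2"
    using order_tendstoD(2)[OF B] \<epsilon> by simp
  with bound show "\<forall>\<^sub>F n in sequentially. \<forall>x\<in>S. dist (f n x) 0 < \<epsilon>"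
  proof eventually_elim
    case (elim n)
    show ?case
    proof
      fix x assume "x \<in> S"
      then have "\<bar>f n x\<bar>\<^sup>2 < \<epsilon>\<^sup>2"
        using elim by fastforce
      then show "dist (f n x) 0 < \<epsilon>"
        using \<epsilon> by (simp add: power2_less_imp_less)
    qed
  qed
qed

definition emden_exp :: "real \<Rightarrow> real" where
  "emden_exp p = 2 / (p - 1)"

definition dissipation :: "real \<Rightarrow> real \<Rightarrow> real" where
  "dissipation M p = 2 * emden_exp p + 2 - M"

definition beta_max :: "real \<Rightarrow> real" where
  "beta_max M = (M - 2)\<^sup>2 / 4"

definition peak_bound :: "real \<Rightarrow> real \<Rightarrow> real" where
  "peak_bound M p = ((p + 1) * (beta_max M + 1)) powr emden_exp p"

lemma beta_max_nonneg: "beta_max M \<ge> 0"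
  by (simp add: beta_max_def)

lemma dissipation_critical: "M > 2 \<Longrightarrow> dissipation M ((M + 2) / (M - 2)) = 0"
  by (simp add: dissipation_def emden_exp_def field_simps)

locale radial_ode =
  fixes M p :: real and v v' :: "real \<Rightarrow> real"
  assumes M_gt_2: "M > 2" and p_gt_1: "p > 1" and p_subcritical: "p < (M + 2) / (M - 2)"
    and v_deriv: "\<forall>t\<in>{0..1}. (v has_real_derivative v' t) (at t within {0..1})"
    and ode: "\<forall>t\<in>{0<..<1}. ((\<lambda>s. s powr (M - 1) * v' s) has_real_derivative
               - (t powr (M - 1) * (\<bar>v t\<bar> powr (p - 1) * v t))) (at t)"
begin

abbreviation "\<kappa> \<equiv> emden_exp p"
abbreviation "\<alpha> \<equiv> dissipation M p"

text \<open>In the notation above, \<open>\<phi> = y' = r dy/dr\<close> and \<open>energy = H\<close>.\<close>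
definition "\<beta> = \<kappa> * (M - 2 - \<kappa>)"
definition "nonlin x = \<bar>x\<bar> powr (p - 1) * x"
definition "flux r = r powr (M - 1) * v' r"
definition "y r = r powr \<kappa> * v r"
definition "\<phi> r = \<kappa> * y r + r powr (\<kappa> + 2 - M) * flux r"
definition "energy r = (\<phi> r)\<^sup>2 / 2 - \<beta> * (y r)\<^sup>2 / 2 + \<bar>y r\<bar> powr (p + 1) / (p + 1)"

lemma kappa_pos: "\<kappa> > 0"
  using p_gt_1 by (simp add: emden_exp_def)

lemma kappa_mult: "\<kappa> * (p - 1) = 2"
proof -
  have "p - 1 \<noteq> 0"
    using p_gt_1 by simp
  then show ?thesis
    by (simp add: emden_exp_def field_simps)
qed

lemma dissipation_pos: "\<alpha> > 0"
proof -
  have "p - 1 < 4 / (M - 2)"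
    using p_subcritical M_gt_2 by (simp add: field_simps)
  then have "4 / (p - 1) > M - 2"
    using p_gt_1 M_gt_2 by (simp add: field_simps)
  then show ?thesis
    by (simp add: dissipation_def emden_exp_def)
qed

lemma beta_le_beta_max: "\<beta> \<le> beta_max M"
proof -
  have "beta_max M - \<beta> = (\<kappa> - (M - 2) / 2)\<^sup>2"
    by (simp add: beta_max_def \<beta>_def power2_eq_square field_simps)
  then show ?thesis
    by (metis diff_ge_0_iff_ge zero_le_power2)
qed

lemma v_continuous: "continuous_on {0..1} v"
  using v_deriv by (intro DERIV_continuous_on) auto

lemma nonlin_v_continuous: "continuous_on {0..1} (\<lambda>t. nonlin (v t))"
  unfolding nonlin_def
  by (rule continuous_on_mult[OF continuous_on_powr'[OF continuous_on_rabs[OF v_continuous]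
        continuous_on_const] v_continuous]) (use p_gt_1 in auto)

lemma v_has_derivative:
  assumes "t \<in> {0<..<1}"
  shows "(v has_real_derivative v' t) (at t)"
proof -
  have "(v has_real_derivative v' t) (at t within {0..1})"
    using v_deriv assms by auto
  then show ?thesis
    using at_within_Icc_at[of 0 t 1] assms by simp
qed

lemma flux_has_derivative:
  "t \<in> {0<..<1} \<Longrightarrow> (flux has_real_derivative - (t powr (M - 1) * nonlin (v t))) (at t)"
  using ode unfolding flux_def nonlin_def by auto

lemma flux_continuous: "0 < a \<Longrightarrow> b < 1 \<Longrightarrow> continuous_on {a..b} flux"
  by (rule DERIV_continuous_on, rule has_field_derivative_at_within, rule flux_has_derivative) auto

text \<open>Since \<open>v\<close> is bounded, the flux is small somewhere in \<open>(0, \<rho>)\<close>; the equation bounds its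
  variation from there to \<open>r\<close>.\<close>
lemma flux_le_approx:
  assumes K: "\<forall>x\<in>{0..1}. \<bar>nonlin (v x)\<bar> \<le> K" and B: "\<forall>x\<in>{0..1}. \<bar>v x\<bar> \<le> B"
    and r: "0 < \<rho>" "\<rho> < r" "r < 1"
  shows "\<bar>flux r\<bar> \<le> K * r powr M + 2 * B * \<rho> powr (M - 2)"
proof -
  have cont: "continuous_on {0..\<rho>} v"
    by (rule continuous_on_subset[OF v_continuous]) (use r in auto)
  have der: "(v has_real_derivative v' x) (at x)" if "0 < x" "x < \<rho>" for x
    using that r by (intro v_has_derivative) auto
  obtain \<xi> where \<xi>: "0 < \<xi>" "\<xi> < \<rho>" "v \<rho> - v 0 = \<rho> * v' \<xi>"
    using MVT_interior[OF r(1) cont der] by auto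
  have "\<rho> * \<bar>v' \<xi>\<bar> \<le> 2 * B"
    using \<xi>(3) B[rule_format, of \<rho>] B[rule_format, of 0] r abs_triangle_ineq4[of "v \<rho>" "v 0"]
    by (simp add: abs_mult)
  then have "\<bar>v' \<xi>\<bar> \<le> 2 * B / \<rho>"
    using r by (simp add: field_simps)
  moreover have "\<xi> powr (M - 1) \<le> \<rho> powr (M - 1)"
    using \<xi> M_gt_2 by (intro powr_mono2) auto
  ultimately have "\<bar>flux \<xi>\<bar> \<le> \<rho> powr (M - 1) * (2 * B / \<rho>)"
    unfolding flux_def abs_mult by (intro mult_mono) auto
  also have "\<dots> = 2 * B * \<rho> powr (M - 2)"
    using r powr_add[of \<rho> "M - 2" 1] by simp
  finally have small: "\<bar>flux \<xi>\<bar> \<le> 2 * B * \<rho> powr (M - 2)" .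
  have cont': "continuous_on {\<xi>..r} flux"
    using \<xi> r by (intro flux_continuous) auto
  have der': "(flux has_real_derivative - (x powr (M - 1) * nonlin (v x))) (at x)"
    if "\<xi> < x" "x < r" for x
    using that \<xi> r by (intro flux_has_derivative) auto
  obtain z where z: "\<xi> < z" "z < r"
      "flux r - flux \<xi> = (r - \<xi>) * - (z powr (M - 1) * nonlin (v z))"
    using MVT_interior[OF _ cont' der'] \<xi> r by auto
  have "z powr (M - 1) \<le> r powr (M - 1)"
    using z \<xi> M_gt_2 by (intro powr_mono2) auto
  moreover have "\<bar>nonlin (v z)\<bar> \<le> K"
    using K z \<xi> r by auto
  ultimately have "\<bar>flux r - flux \<xi>\<bar> \<le> r * (r powr (M - 1) * K)"
    unfolding z(3) abs_mult abs_minus_cancel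
    using z \<xi> by (intro mult_mono) auto
  also have "\<dots> = K * r powr M"
    using r by (simp add: powr_diff)
  finally show ?thesis
    using small by linarith
qed

lemma flux_bound: "\<exists>K. \<forall>r\<in>{0<..<1}. \<bar>flux r\<bar> \<le> K * r powr M"
proof -
  obtain K where K: "\<forall>x\<in>{0..1}. \<bar>nonlin (v x)\<bar> \<le> K"
    using continuous_on_Icc_abs_bounded[OF nonlin_v_continuous] by blast
  obtain B where B: "\<forall>x\<in>{0..1}. \<bar>v x\<bar> \<le> B"
    using continuous_on_Icc_abs_bounded[OF v_continuous] by blast
  have "\<bar>flux r\<bar> \<le> K * r powr M" if r: "r \<in> {0<..<1}" for r
  proof (rule tendsto_lowerbound)
    show "((\<lambda>\<rho>. K * r powr M + 2 * B * \<rho> powr (M - 2)) \<longlongrightarrow> K * r powr M) (at_right 0)"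
    proof -
      have "((\<lambda>\<rho>. \<rho> powr (M - 2)) \<longlongrightarrow> 0) (at_right 0)"
        using M_gt_2 by (intro tendsto_zero_powrI tendsto_ident_at tendsto_const)
          (auto simp: eventually_at_right_less eventually_at_filter)
      from tendsto_add[OF tendsto_const tendsto_mult[OF tendsto_const this]]
      show ?thesis by simp
    qed
    show "\<forall>\<^sub>F \<rho> in at_right 0. \<bar>flux r\<bar> \<le> K * r powr M + 2 * B * \<rho> powr (M - 2)"
      using r by (intro eventually_at_rightI[of 0 r]) (auto intro: flux_le_approx[OF K B])
  qed simp
  then show ?thesis by blast
qed

lemma nonlin_y: "r > 0 \<Longrightarrow> nonlin (y r) = r powr (\<kappa> + 2) * nonlin (v r)"
  using kappa_mult
  by (simp add: nonlin_def y_def abs_mult powr_mult powr_powr powr_add)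

lemma phi_eq: "r > 0 \<Longrightarrow> \<phi> r = \<kappa> * y r + r powr (\<kappa> + 1) * v' r"
  by (simp add: \<phi>_def flux_def powr_add[symmetric] mult.assoc[symmetric])

lemma y_has_derivative:
  assumes r: "r \<in> {0<..<1}"
  shows "(y has_real_derivative \<phi> r / r) (at r)"
proof -
  have "(y has_real_derivative \<kappa> * r powr (\<kappa> - 1) * v r + r powr \<kappa> * v' r) (at r)"
    unfolding y_def using r v_has_derivative[OF r] by (auto intro!: derivative_eq_intros)
  moreover have "\<kappa> * r powr (\<kappa> - 1) * v r + r powr \<kappa> * v' r = \<phi> r / r"
    using r by (simp add: phi_eq y_def powr_diff powr_add field_simps)
  ultimately show ?thesis by simp
qed

lemma phi_has_derivative:
  assumes r: "r \<in> {0<..<1}"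
  shows "(\<phi> has_real_derivative (\<alpha> * \<phi> r + \<beta> * y r - nonlin (y r)) / r) (at r)"
proof -
  define c where "c = \<kappa> + 2 - M"
  have "((\<lambda>r. \<kappa> * y r + r powr c * flux r) has_real_derivative \<kappa> * (\<phi> r / r)
        + (c * (r powr (c - 1) * flux r) - r powr c * r powr (M - 1) * nonlin (v r))) (at r)"
    using r y_has_derivative[OF r] flux_has_derivative[OF r] by (auto intro!: derivative_eq_intros)
  moreover have "(\<lambda>r. \<kappa> * y r + r powr c * flux r) = \<phi>"
    by (simp add: fun_eq_iff \<phi>_def c_def)
  moreover have "r powr (c - 1) * flux r = (\<phi> r - \<kappa> * y r) / r"
  proof -
    have "r powr (c - 1) = r powr c / r"
      using r by (simp add: powr_diff)
    moreover have "r powr c * flux r = \<phi> r - \<kappa> * y r"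
      by (simp add: \<phi>_def c_def)
    ultimately show ?thesis
      by simp
  qed
  moreover have "r powr c * r powr (M - 1) * nonlin (v r) = nonlin (y r) / r"
  proof -
    have "r powr c * r powr (M - 1) * r = r powr (\<kappa> + 2)"
      using r powr_add[of r "\<kappa> + 1" 1] by (simp add: c_def powr_add[symmetric] add.commute)
    then show ?thesis
      using r nonlin_y[of r] by (simp add: field_simps)
  qed
  moreover have "\<kappa> * (\<phi> r / r) + (c * ((\<phi> r - \<kappa> * y r) / r) - nonlin (y r) / r)
      = (\<alpha> * \<phi> r + \<beta> * y r - nonlin (y r)) / r"
    by (simp add: dissipation_def \<beta>_def c_def diff_divide_distrib add_divide_distrib algebra_simps)
  ultimately show ?thesis
    by (simp only:)
qed

lemma energy_has_derivative:
  assumes r: "r \<in> {0<..<1}"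
  shows "(energy has_real_derivative \<alpha> * (\<phi> r)\<^sup>2 / r) (at r)"
proof -
  define G where "G = (\<lambda>r. \<bar>y r\<bar> powr (p + 1) / (p + 1))"
  have "(G has_real_derivative nonlin (y r) * (\<phi> r / r)) (at r)"
    using DERIV_cdivide[OF DERIV_chain2[OF has_real_derivative_abs_powr[of p "y r"] y_has_derivative[OF r]],
        of "p + 1"] p_gt_1
    by (simp add: G_def nonlin_def mult.assoc)
  then have "((\<lambda>r. (\<phi> r)\<^sup>2 / 2 - \<beta> * (y r)\<^sup>2 / 2 + G r) has_real_derivative
      \<alpha> * (\<phi> r)\<^sup>2 / r) (at r)"
    using r p_gt_1 phi_has_derivative[OF r] y_has_derivative[OF r]
    by (auto intro!: derivative_eq_intros simp: field_simps power2_eq_square)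
  then show ?thesis
    by (simp add: energy_def[abs_def] G_def)
qed

lemma y_zero [simp]: "y 0 = 0"
  by (simp add: y_def)

lemma phi_zero [simp]: "\<phi> 0 = 0"
  by (simp add: \<phi>_def)

lemma energy_zero [simp]: "energy 0 = 0"
  using p_gt_1 by (simp add: energy_def)

lemma y_continuous: "continuous_on {0..1} y"
  unfolding y_def using kappa_pos
  by (intro continuous_on_mult v_continuous continuous_on_powr' continuous_on_id continuous_on_const) auto

lemma phi_tendsto_zero: "(\<phi> \<longlongrightarrow> 0) (at_right 0)"
proof -
  obtain K where K: "\<forall>r\<in>{0<..<1}. \<bar>flux r\<bar> \<le> K * r powr M"
    using flux_bound by blast
  have "\<bar>\<phi> r\<bar> \<le> \<kappa> * \<bar>y r\<bar> + K * r powr (\<kappa> + 2)" if r: "r \<in> {0<..<1}" for r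
  proof -
    have "r powr (\<kappa> + 2 - M) * \<bar>flux r\<bar> \<le> r powr (\<kappa> + 2 - M) * (K * r powr M)"
      using K r by (intro mult_left_mono) auto
    also have "\<dots> = K * r powr (\<kappa> + 2)"
      using r by (simp add: powr_add[symmetric])
    moreover have "\<bar>\<kappa> * y r\<bar> = \<kappa> * \<bar>y r\<bar>"
        "\<bar>r powr (\<kappa> + 2 - M) * flux r\<bar> = r powr (\<kappa> + 2 - M) * \<bar>flux r\<bar>"
      using kappa_pos by (simp_all add: abs_mult)
    ultimately show ?thesis
      unfolding \<phi>_def using abs_triangle_ineq[of "\<kappa> * y r" "r powr (\<kappa> + 2 - M) * flux r"] by linarith
  qed
  then have ev: "\<forall>\<^sub>F r in at_right 0. norm (\<phi> r) \<le> \<kappa> * \<bar>y r\<bar> + K * r powr (\<kappa> + 2)"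
    by (intro eventually_at_rightI[of 0 1]) auto
  have "(y \<longlongrightarrow> 0) (at_right 0)"
    using y_continuous by (auto simp: continuous_on_def at_within_Icc_at_right dest!: bspec[of _ _ 0])
  moreover have "((\<lambda>r. r powr (\<kappa> + 2)) \<longlongrightarrow> 0) (at_right 0)"
    using kappa_pos by (intro tendsto_zero_powrI[where b="\<kappa> + 2"] tendsto_ident_at tendsto_const)
      (auto simp: eventually_at_filter)
  ultimately have "((\<lambda>r. \<kappa> * \<bar>y r\<bar> + K * r powr (\<kappa> + 2)) \<longlongrightarrow> 0) (at_right 0)"
    using tendsto_add[OF tendsto_mult[OF tendsto_const tendsto_rabs_zero] tendsto_mult[OF tendsto_const]]
    by fastforce
  with ev show ?thesis
    by (rule Lim_null_comparison)
qed

lemma y_continuous_on: "0 \<le> a \<Longrightarrow> b \<le> 1 \<Longrightarrow> continuous_on {a..b} y"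
  by (rule continuous_on_subset[OF y_continuous]) auto

lemma phi_continuous_on:
  assumes "0 < b" "b < 1"
  shows "continuous_on {0..b} \<phi>"
proof -
  have "isCont \<phi> x" if "0 < x" "x \<le> b" for x
    using that assms by (intro DERIV_isCont[OF phi_has_derivative]) auto
  then show ?thesis
    using assms phi_tendsto_zero
    by (intro continuous_on_IccI) (auto simp: isCont_def filterlim_at_split)
qed

lemma energy_continuous_on:
  assumes "0 < b" "b < 1"
  shows "continuous_on {0..b} energy"
  unfolding energy_def using assms p_gt_1 phi_continuous_on y_continuous_on[of 0 b]
  by (intro continuous_intros continuous_on_powr' continuous_on_rabs) auto

lemma energy_mono:
  assumes "0 \<le> a" "a \<le> b" "b < 1"
  shows "energy a \<le> energy b"
proof (cases "a = b")
  case False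
  show ?thesis
  proof (rule DERIV_nonneg_imp_increasing_open[OF assms(2)])
    fix x assume "a < x" "x < b"
    then have "x \<in> {0<..<1}"
      using assms by auto
    then show "\<exists>z. (energy has_real_derivative z) (at x) \<and> 0 \<le> z"
      using energy_has_derivative dissipation_pos by (intro exI[of _ "\<alpha> * (\<phi> x)\<^sup>2 / x"]) auto
  next
    show "continuous_on {a..b} energy"
      using assms False by (intro continuous_on_subset[OF energy_continuous_on[of b]]) auto
  qed
qed simp

lemma energy_nonneg: "0 \<le> r \<Longrightarrow> r < 1 \<Longrightarrow> energy r \<ge> 0"
  using energy_mono[of 0 r] by simp

lemma phi_sq_le:
  assumes "0 \<le> r" "r \<le> T" "T < 1"
  shows "(\<phi> r)\<^sup>2 \<le> 2 * energy T + \<beta> * (y r)\<^sup>2"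
proof -
  have "(\<phi> r)\<^sup>2 / 2 - \<beta> * (y r)\<^sup>2 / 2 \<le> energy r"
    using p_gt_1 by (simp add: energy_def)
  then show ?thesis
    using energy_mono[OF assms] by linarith
qed

text \<open>At such a point \<open>energy \<ge> 0\<close> forces \<open>|y|\<^sup>p\<^sup>-\<^sup>1 > \<beta>\<close>.\<close>
lemma phi_derivative_neg_at_positive_critical:
  assumes e: "e \<in> {0<..<1}" and crit: "\<phi> e = 0" and pos: "y e > 0"
  shows "(\<alpha> * \<phi> e + \<beta> * y e - nonlin (y e)) / e < 0"
proof -
  define u where "u = y e powr (p - 1)"
  have u: "u > 0"
    using pos by (simp add: u_def)
  have "y e powr (p + 1) = u * (y e)\<^sup>2"
    using pos powr_add[of "y e" "p - 1" 2] by (simp add: u_def add.commute)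
  then have "(y e)\<^sup>2 * (u / (p + 1) - \<beta> / 2) \<ge> 0"
    using energy_nonneg[of e] e pos crit by (simp add: energy_def algebra_simps)
  then have "u / (p + 1) \<ge> \<beta> / 2"
    using pos by (simp add: zero_le_mult_iff)
  have "u > \<beta>"
  proof (cases "\<beta> > 0")
    case True
    then have "\<beta> < p * \<beta>"
      using p_gt_1 by simp
    then show ?thesis
      using \<open>u / (p + 1) \<ge> \<beta> / 2\<close> p_gt_1 by (simp add: field_simps)
  qed (use u in simp)
  then show ?thesis
    using e crit pos by (simp add: nonlin_def u_def divide_neg_pos)
qed

lemma no_positive_interior_min:
  assumes lr: "0 < l" "l < e" "e < r" "r < 1" and pos: "y e > 0"
    and min: "\<forall>z\<in>{l..r}. y e \<le> y z"
  shows False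
proof -
  have e: "e \<in> {0<..<1}"
    using lr by auto
  have "\<phi> e / e = 0"
    using min lr by (intro DERIV_local_min[OF y_has_derivative[OF e], of "min (e - l) (r - e)"])
      (auto simp: abs_if)
  then have crit: "\<phi> e = 0"
    using e by simp
  obtain d where d: "d > 0" "\<forall>h>0. h < d \<longrightarrow> \<phi> (e + h) < \<phi> e"
    using DERIV_neg_dec_right[OF phi_has_derivative[OF e]
        phi_derivative_neg_at_positive_critical[OF e crit pos]] by blast
  define h where "h = min (d / 2) ((r - e) / 2)"
  have h: "0 < h" "h < d" "e + h < r"
    using d lr by (auto simp: h_def min_def field_simps)
  have "y (e + h) < y e"
  proof (rule DERIV_neg_imp_decreasing_open[of e "e + h" y])
    fix x assume "e < x" "x < e + h"
    then show "\<exists>z. (y has_real_derivative z) (at x) \<and> z < 0"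
      using d(2)[rule_format, of "x - e"] crit h lr y_has_derivative[of x]
      by (auto intro!: exI divide_neg_pos)
  qed (use h lr in \<open>auto intro: y_continuous_on\<close>)
  moreover have "y e \<le> y (e + h)"
    using min h lr by auto
  ultimately show False
    by simp
qed

lemma min_endpoints_le_on_positive:
  assumes lr: "0 < l" "l \<le> x" "x \<le> r" "r < 1" and pos: "\<forall>z\<in>{l..r}. y z > 0"
  shows "min (y l) (y r) \<le> y x"
proof -
  obtain e where e: "e \<in> {l..r}" "\<forall>z\<in>{l..r}. y e \<le> y z"
    using continuous_attains_inf[of "{l..r}" y] y_continuous_on[of l r] lr by auto
  have "e = l \<or> e = r"
    using no_positive_interior_min[of l e r] e pos lr by force
  then show ?thesis
    using e lr by auto
qed

lemma phi_nonneg_if_min_at_left: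
  assumes d: "d \<in> {0<..<1}" "d < c" and min: "\<forall>z\<in>{d..c}. y d \<le> y z"
  shows "\<phi> d \<ge> 0"
proof (rule ccontr)
  assume "\<not> \<phi> d \<ge> 0"
  then have "\<phi> d / d < 0"
    using d by (simp add: divide_neg_pos)
  then obtain \<delta> where \<delta>: "\<delta> > 0" "\<forall>h>0. h < \<delta> \<longrightarrow> y (d + h) < y d"
    using DERIV_neg_dec_right[OF y_has_derivative[OF d(1)]] by blast
  define h where "h = min (\<delta> / 2) (c - d)"
  have "y (d + h) < y d"
    using \<delta> d by (simp add: h_def)
  moreover have "y d \<le> y (d + h)"
    using min \<delta> d by (simp add: h_def)
  ultimately show False
    by simp
qed

lemma phi_nonpos_if_min_at_right:
  assumes d: "d \<in> {0<..<1}" "c < d" and min: "\<forall>z\<in>{c..d}. y d \<le> y z"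
  shows "\<phi> d \<le> 0"
proof (rule ccontr)
  assume "\<not> \<phi> d \<le> 0"
  then have "\<phi> d / d > 0"
    using d by simp
  then obtain \<delta> where \<delta>: "\<delta> > 0" "\<forall>h>0. h < \<delta> \<longrightarrow> y (d - h) < y d"
    using DERIV_pos_inc_left[OF y_has_derivative[OF d(1)]] by blast
  define h where "h = min (\<delta> / 2) (d - c)"
  have "y (d - h) < y d"
    using \<delta> d by (simp add: h_def)
  moreover have "y d \<le> y (d - h)"
    using min \<delta> d by (simp add: h_def)
  ultimately show False
    by simp
qed

text \<open>With \<open>\<sigma> = \<plusminus>1\<close> the sign of \<open>\<phi>\<close>:
  \<open>energy' = \<alpha> \<phi>\<^sup>2/r \<le> \<alpha> S \<sigma> \<phi>/r = \<alpha> S \<sigma> y'\<close>.\<close>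
lemma energy_gain_le:
  assumes ac: "0 \<le> a" "a \<le> c" "c < 1" and \<sigma>: "\<bar>\<sigma>\<bar> = 1"
    and sign: "\<forall>x\<in>{a<..<c}. 0 \<le> \<sigma> * \<phi> x \<and> \<sigma> * \<phi> x \<le> S"
  shows "energy c - energy a \<le> \<alpha> * S * (\<sigma> * (y c - y a))"
proof (cases "a = c")
  case False
  have "energy c - \<alpha> * S * \<sigma> * y c \<le> energy a - \<alpha> * S * \<sigma> * y a"
  proof (rule DERIV_nonpos_imp_decreasing_open[OF ac(2)])
    fix x assume x: "a < x" "x < c"
    then have x01: "x \<in> {0<..<1}"
      using ac by auto
    have "\<sigma> * \<sigma> = 1"
      using \<sigma> by (metis abs_mult_self_eq mult_1_right)
    then have "\<alpha> * (\<phi> x)\<^sup>2 / x - \<alpha> * S * \<sigma> * (\<phi> x / x)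
        = \<alpha> * (\<sigma> * \<phi> x) * (\<sigma> * \<phi> x - S) / x"
      by (simp add: power2_eq_square algebra_simps diff_divide_distrib)
    also have "\<dots> \<le> 0"
      using sign x x01 dissipation_pos
      by (intro divide_nonpos_pos mult_nonneg_nonpos) auto
    finally have "\<alpha> * (\<phi> x)\<^sup>2 / x - \<alpha> * S * \<sigma> * (\<phi> x / x) \<le> 0" .
    moreover have "((\<lambda>r. energy r - \<alpha> * S * \<sigma> * y r) has_real_derivative
        \<alpha> * (\<phi> x)\<^sup>2 / x - \<alpha> * S * \<sigma> * (\<phi> x / x)) (at x)"
      by (intro DERIV_diff DERIV_cmult energy_has_derivative y_has_derivative x01)
    ultimately show "\<exists>z. ((\<lambda>r. energy r - \<alpha> * S * \<sigma> * y r) has_real_derivative z) (at x) \<and> z \<le> 0"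
      by blast
  next
    show "continuous_on {a..c} (\<lambda>r. energy r - \<alpha> * S * \<sigma> * y r)"
      using ac False
      by (intro continuous_intros continuous_on_subset[OF energy_continuous_on[of c]] y_continuous_on) auto
  qed
  then show ?thesis
    by (simp add: algebra_simps)
qed simp

lemma energy_gain_on_positive_nodal_zone:
  assumes ab: "0 \<le> a" "a < b" "b < 1" and zeros: "y a = 0" "y b = 0"
    and pos: "\<forall>r\<in>{a<..<b}. y r > 0"
    and S: "\<forall>r\<in>{a..b}. \<bar>\<phi> r\<bar> \<le> S" and Y: "\<forall>r\<in>{a..b}. \<bar>y r\<bar> \<le> Y"
  shows "energy b - energy a \<le> 2 * \<alpha> * S * Y"
proof -
  obtain c where c: "c \<in> {a..b}" "\<forall>z\<in>{a..b}. y z \<le> y c"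
    using continuous_attains_sup[of "{a..b}" y] y_continuous_on[of a b] ab by auto
  have "y ((a + b) / 2) > 0"
    using pos ab by auto
  then have "y c > 0"
    using c(2)[rule_format, of "(a + b) / 2"] ab by auto
  then have "c \<noteq> a" "c \<noteq> b"
    using zeros by auto
  then have ac: "a < c" "c < b"
    using c(1) by auto
  have rising: "\<forall>x\<in>{a<..<c}. 0 \<le> 1 * \<phi> x \<and> 1 * \<phi> x \<le> S"
  proof
    fix x assume x: "x \<in> {a<..<c}"
    have "y x \<le> y c"
      using c(2) x ac by auto
    moreover have "\<forall>w\<in>{x..c}. y w > 0"
      using pos x ac by auto
    ultimately have "\<forall>z\<in>{x..c}. y x \<le> y z"
      using min_endpoints_le_on_positive[of x _ c] x ac ab by auto
    then have "\<phi> x \<ge> 0"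
      using x ac ab by (intro phi_nonneg_if_min_at_left[of x c]) auto
    then show "0 \<le> 1 * \<phi> x \<and> 1 * \<phi> x \<le> S"
      using S[rule_format, of x] x ac by auto
  qed
  have falling: "\<forall>x\<in>{c<..<b}. 0 \<le> -1 * \<phi> x \<and> -1 * \<phi> x \<le> S"
  proof
    fix x assume x: "x \<in> {c<..<b}"
    have "y x \<le> y c"
      using c(2) x ac by auto
    moreover have "\<forall>w\<in>{c..x}. y w > 0"
      using pos x ac by auto
    ultimately have "\<forall>z\<in>{c..x}. y x \<le> y z"
      using min_endpoints_le_on_positive[of c _ x] x ac ab by auto
    then have "\<phi> x \<le> 0"
      using x ac ab by (intro phi_nonpos_if_min_at_right[of x c]) auto
    then show "0 \<le> -1 * \<phi> x \<and> -1 * \<phi> x \<le> S"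
      using S[rule_format, of x] x ac by auto
  qed
  have "energy c - energy a \<le> \<alpha> * S * y c"
    using energy_gain_le[of a c 1 S] rising ac ab zeros by simp
  moreover have "energy b - energy c \<le> \<alpha> * S * y c"
    using energy_gain_le[of c b "-1" S] falling ac ab zeros by simp
  moreover have "\<alpha> * S * y c \<le> \<alpha> * S * Y"
  proof (rule mult_left_mono)
    show "y c \<le> Y"
      using Y[rule_format, of c] c(1) by auto
    show "0 \<le> \<alpha> * S"
      using S[rule_format, of a] ab dissipation_pos by auto
  qed
  ultimately show ?thesis
    by simp
qed

lemma radial_ode_uminus: "radial_ode M p (\<lambda>t. - v t) (\<lambda>t. - v' t)"
proof
  show "\<forall>t\<in>{0..1}. ((\<lambda>t. - v t) has_real_derivative - v' t) (at t within {0..1})"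
    using v_deriv by (auto intro: DERIV_minus)
  show "\<forall>t\<in>{0<..<1}. ((\<lambda>s. s powr (M - 1) * - v' s) has_real_derivative
          - (t powr (M - 1) * (\<bar>- v t\<bar> powr (p - 1) * - v t))) (at t)"
  proof
    fix t :: real assume "t \<in> {0<..<1}"
    then have "((\<lambda>s. s powr (M - 1) * v' s) has_real_derivative
        - (t powr (M - 1) * (\<bar>v t\<bar> powr (p - 1) * v t))) (at t)"
      using ode by blast
    from DERIV_minus[OF this]
    show "((\<lambda>s. s powr (M - 1) * - v' s) has_real_derivative
        - (t powr (M - 1) * (\<bar>- v t\<bar> powr (p - 1) * - v t))) (at t)"
      by simp
  qed
qed (use M_gt_2 p_gt_1 p_subcritical in auto)

lemma energy_gain_on_nodal_zone:
  assumes ab: "0 \<le> a" "a < b" "b < 1" and zeros: "y a = 0" "y b = 0"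
    and nz: "\<forall>r\<in>{a<..<b}. y r \<noteq> 0"
    and S: "\<forall>r\<in>{a..b}. \<bar>\<phi> r\<bar> \<le> S" and Y: "\<forall>r\<in>{a..b}. \<bar>y r\<bar> \<le> Y"
  shows "energy b - energy a \<le> 2 * \<alpha> * S * Y"
proof -
  have "(\<forall>r\<in>{a<..<b}. y r > 0) \<or> (\<forall>r\<in>{a<..<b}. y r < 0)"
    using continuous_on_nonzero_sign_cases[OF y_continuous_on[of a b] nz] ab by auto
  then show ?thesis
  proof (elim disjE)
    assume "\<forall>r\<in>{a<..<b}. y r > 0"
    then show ?thesis
      using energy_gain_on_positive_nodal_zone[OF ab zeros _ S Y] by blast
  next
    assume neg: "\<forall>r\<in>{a<..<b}. y r < 0"
    interpret N: radial_ode M p "\<lambda>t. - v t" "\<lambda>t. - v' t"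
      by (rule radial_ode_uminus)
    have y: "N.y r = - y r" and \<phi>: "N.\<phi> r = - \<phi> r" for r
      by (simp_all add: N.y_def y_def N.\<phi>_def \<phi>_def N.flux_def flux_def)
    have "N.energy r = energy r" for r
      by (simp add: N.energy_def energy_def y \<phi>)
    then show ?thesis
      using N.energy_gain_on_positive_nodal_zone[OF ab] zeros neg S Y by (simp add: y \<phi>)
  qed
qed

lemma sq_le_at_abs_max:
  assumes T: "0 < T" "T < 1" and yT: "y T = 0"
    and c: "c \<in> {0..T}" "\<forall>z\<in>{0..T}. \<bar>y z\<bar> \<le> \<bar>y c\<bar>"
  shows "(y c)\<^sup>2 \<le> energy T + peak_bound M p"
proof (cases "y c = 0")
  case True
  then show ?thesis
    using energy_nonneg[of T] T by (simp add: peak_bound_def)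
next
  case False
  then have c0T: "0 < c" "c < T"
    using c(1) yT by (auto simp: order.order_iff_strict)
  then have c01: "c \<in> {0<..<1}"
    using T by auto
  have near: "z \<in> {0..T}" if "\<bar>c - z\<bar> < min c (T - c)" for z
    using that by (auto simp: abs_if split: if_splits)
  have "\<phi> c / c = 0"
  proof (cases "y c > 0")
    case True
    show ?thesis
      using c(2) near True c0T
      by (intro DERIV_local_max[OF y_has_derivative[OF c01], of "min c (T - c)"]) force+
  next
    case False
    then have "y c < 0"
      using \<open>y c \<noteq> 0\<close> by simp
    then show ?thesis
      using c(2) near c0T
      by (intro DERIV_local_min[OF y_has_derivative[OF c01], of "min c (T - c)"]) force+
  qed
  then have "\<phi> c = 0"
    using c0T by simp
  then have "\<bar>y c\<bar> powr (p + 1) / (p + 1) - \<beta> * \<bar>y c\<bar>\<^sup>2 / 2 \<le> energy T"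
    using energy_mono[of c T] c0T T by (simp add: energy_def)
  moreover have "\<beta> * \<bar>y c\<bar>\<^sup>2 \<le> beta_max M * \<bar>y c\<bar>\<^sup>2"
    using beta_le_beta_max by (intro mult_right_mono) auto
  ultimately have "\<bar>y c\<bar> powr (p + 1) / (p + 1) - beta_max M * \<bar>y c\<bar>\<^sup>2 / 2 \<le> energy T"
    by linarith
  from sq_le_of_potential_le[OF p_gt_1 beta_max_nonneg energy_nonneg abs_ge_zero this]
  show ?thesis
    using T by (simp add: peak_bound_def emden_exp_def)
qed

lemma abs_phi_le:
  assumes "0 \<le> r" "r \<le> T" "T < 1" and Y: "\<forall>z\<in>{0..T}. \<bar>y z\<bar> \<le> Y"
  shows "\<bar>\<phi> r\<bar> \<le> sqrt (2 * energy T + beta_max M * Y\<^sup>2)"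
proof -
  have "\<beta> * (y r)\<^sup>2 \<le> beta_max M * (y r)\<^sup>2"
    using beta_le_beta_max by (intro mult_right_mono) auto
  also have "\<dots> \<le> beta_max M * Y\<^sup>2"
    using power_mono[OF Y[rule_format] abs_ge_zero, of r 2] assms beta_max_nonneg
    by (intro mult_left_mono) auto
  finally have "(\<phi> r)\<^sup>2 \<le> 2 * energy T + beta_max M * Y\<^sup>2"
    using phi_sq_le[OF assms(1-3)] by simp
  then show ?thesis
    by (metis real_sqrt_abs real_sqrt_le_mono)
qed

lemma energy_le_zone_count:
  fixes t :: "nat \<Rightarrow> real" and i :: nat
  assumes t0: "t 0 = 0" and t_less: "\<forall>k<i. t k < t (Suc k)" and ti: "t i < 1"
    and zeros: "\<forall>k. 1 \<le> k \<and> k \<le> i \<longrightarrow> v (t k) = 0"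
    and nonzero: "\<forall>k<i. \<forall>r. t k < r \<and> r < t (Suc k) \<longrightarrow> v r \<noteq> 0"
    and S: "\<forall>r\<in>{0..t i}. \<bar>\<phi> r\<bar> \<le> S" and Y: "\<forall>r\<in>{0..t i}. \<bar>y r\<bar> \<le> Y"
  shows "energy (t i) \<le> i * (2 * \<alpha> * S * Y)"
proof -
  have t_range: "0 \<le> t k \<and> t k \<le> t i" if "k \<le> i" for k
    using stepwise_less_imp_less[OF t_less, of 0 k] stepwise_less_imp_less[OF t_less, of k i] that t0
    by (cases "k = 0"; cases "k = i") auto
  have y_zero: "y (t k) = 0" if "k \<le> i" for k
    using zeros that t0 by (cases "k = 0") (auto simp: y_def)
  have zone: "energy (t (Suc k)) - energy (t k) \<le> 2 * \<alpha> * S * Y" if k: "k < i" for k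
  proof (rule energy_gain_on_nodal_zone)
    show "0 \<le> t k" "t k < t (Suc k)" "t (Suc k) < 1"
      using t_range[of k] t_range[of "Suc k"] t_less k ti by auto
    show "y (t k) = 0" "y (t (Suc k)) = 0"
      using y_zero k by auto
    show "\<forall>r\<in>{t k<..<t (Suc k)}. y r \<noteq> 0"
      using nonzero k t_range[of k] by (auto simp: y_def)
    show "\<forall>r\<in>{t k..t (Suc k)}. \<bar>\<phi> r\<bar> \<le> S" "\<forall>r\<in>{t k..t (Suc k)}. \<bar>y r\<bar> \<le> Y"
      using S Y t_range[of k] t_range[of "Suc k"] k by auto
  qed
  have "(\<Sum>k<i. energy (t (Suc k)) - energy (t k)) \<le> (\<Sum>k<i. 2 * \<alpha> * S * Y)"
    using zone by (intro sum_mono) auto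
  then show ?thesis
    using sum_lessThan_telescope[of "\<lambda>k. energy (t k)" i] by (simp add: t0)
qed

lemma energy_at_nodal_zero_le:
  fixes t :: "nat \<Rightarrow> real" and i :: nat
  assumes t0: "t 0 = 0" and t_less: "\<forall>k<i. t k < t (Suc k)" and ti: "t i < 1"
    and zeros: "\<forall>k. 1 \<le> k \<and> k \<le> i \<longrightarrow> v (t k) = 0"
    and nonzero: "\<forall>k<i. \<forall>r. t k < r \<and> r < t (Suc k) \<longrightarrow> v r \<noteq> 0"
  shows "energy (t i) \<le> i * \<alpha> * ((beta_max M + 3) * energy (t i) + (beta_max M + 1) * peak_bound M p)"
proof (cases "i = 0")
  case False
  define T where "T = t i"
  have T: "0 < T" "T < 1"
    using stepwise_less_imp_less[OF t_less, of 0 i] t0 ti False by (simp_all add: T_def)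
  have yT: "y T = 0"
    using zeros False by (simp add: T_def y_def)
  obtain c where c: "c \<in> {0..T}" "\<forall>z\<in>{0..T}. \<bar>y z\<bar> \<le> \<bar>y c\<bar>"
    using continuous_attains_sup[of "{0..T}" "\<lambda>z. \<bar>y z\<bar>"] continuous_on_rabs[OF y_continuous_on[of 0 T]] T
    by auto
  define Y where "Y = \<bar>y c\<bar>"
  define H where "H = energy T"
  have H: "H \<ge> 0"
    using energy_nonneg T by (simp add: H_def)
  define S where "S = sqrt (2 * H + beta_max M * Y\<^sup>2)"
  have Y_bound: "\<forall>r\<in>{0..T}. \<bar>y r\<bar> \<le> Y"
    using c by (simp add: Y_def)
  then have S_bound: "\<forall>r\<in>{0..T}. \<bar>\<phi> r\<bar> \<le> S"
    using abs_phi_le T by (simp add: S_def H_def)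
  have "H \<le> i * (2 * \<alpha> * S * Y)"
    using energy_le_zone_count[OF t0 t_less ti zeros nonzero] S_bound Y_bound by (simp add: H_def T_def)
  also have "\<dots> \<le> i * \<alpha> * (S\<^sup>2 + Y\<^sup>2)"
    using sum_squares_bound[of S Y] dissipation_pos
    by (simp add: mult.assoc mult_left_mono)
  also have "\<dots> = i * \<alpha> * (2 * H + (beta_max M + 1) * Y\<^sup>2)"
    using H beta_max_nonneg by (simp add: S_def algebra_simps)
  also have "\<dots> \<le> i * \<alpha> * (2 * H + (beta_max M + 1) * (H + peak_bound M p))"
    using sq_le_at_abs_max[OF T yT c] dissipation_pos beta_max_nonneg
    by (intro mult_left_mono add_left_mono) (auto simp: Y_def H_def)
  finally show ?thesis
    by (simp add: H_def T_def algebra_simps)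
qed (simp add: t0)

lemma gronwall_integrand_nonneg:
  assumes x: "0 \<le> x" "x \<le> T" "T < 1" and k: "real k \<ge> beta_max M + 2"
  defines "B \<equiv> beta_max M + 1"
  shows "0 \<le> 2 * B * y x * \<phi> x + k * (B * (y x)\<^sup>2 + 2 * energy T)"
proof -
  have B: "B \<ge> 1"
    using beta_max_nonneg by (simp add: B_def)
  have H: "energy T \<ge> 0"
    using energy_nonneg x by auto
  have "- ((y x)\<^sup>2 + (\<phi> x)\<^sup>2) \<le> 2 * y x * \<phi> x"
    using zero_le_power2[of "y x + \<phi> x"] unfolding power2_sum by linarith
  then have "B * - ((y x)\<^sup>2 + (\<phi> x)\<^sup>2) \<le> B * (2 * y x * \<phi> x)"
    using B by (intro mult_left_mono) auto
  moreover have "(\<phi> x)\<^sup>2 \<le> 2 * energy T + B * (y x)\<^sup>2"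
    using phi_sq_le[OF x] beta_le_beta_max mult_right_mono[of \<beta> B "(y x)\<^sup>2"]
    by (simp add: B_def)
  then have "B * (\<phi> x)\<^sup>2 \<le> B * (2 * energy T + B * (y x)\<^sup>2)"
    using B by (intro mult_left_mono) auto
  moreover have "(B + 1) * (B * (y x)\<^sup>2 + 2 * energy T) \<le> k * (B * (y x)\<^sup>2 + 2 * energy T)"
    using k B H by (intro mult_right_mono) (auto simp: B_def)
  ultimately show ?thesis
    using H by (simp add: algebra_simps)
qed

text \<open>Gronwall: \<open>((beta_max M + 1) y\<^sup>2 + 2 energy T) r\<^sup>k\<close> is nondecreasing on \<open>[r, T]\<close>.\<close>
lemma y_sq_le_energy_decay:
  assumes r: "0 < r" "r \<le> T" "T < 1" and yT: "y T = 0" and k: "real k \<ge> beta_max M + 2"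
  shows "(y r)\<^sup>2 \<le> 2 * energy T * (T / r) ^ k"
proof -
  define B where "B = beta_max M + 1"
  define F where "F x = (B * (y x)\<^sup>2 + 2 * energy T) * x ^ k" for x
  have "F r \<le> F T"
  proof (rule DERIV_nonneg_imp_increasing_open[OF r(2)])
    fix x assume x: "r < x" "x < T"
    then have x01: "x \<in> {0<..<1}"
      using r by auto
    have "real k \<ge> 1"
      using k beta_max_nonneg[of M] by linarith
    then have "x ^ k = x ^ (k - 1) * x"
      by (cases k) simp_all
    moreover have "(F has_real_derivative B * (2 * y x * (\<phi> x / x)) * x ^ k
        + (B * (y x)\<^sup>2 + 2 * energy T) * (k * x ^ (k - 1))) (at x)"
      unfolding F_def[abs_def] using y_has_derivative[OF x01]
      by (auto intro!: derivative_eq_intros)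
    ultimately have "(F has_real_derivative
        x ^ (k - 1) * (2 * B * y x * \<phi> x + k * (B * (y x)\<^sup>2 + 2 * energy T))) (at x)"
      using x01 by (simp add: algebra_simps)
    moreover have "0 \<le> x ^ (k - 1) * (2 * B * y x * \<phi> x + k * (B * (y x)\<^sup>2 + 2 * energy T))"
      using gronwall_integrand_nonneg[of x T k] x r k x01 by (simp add: B_def)
    ultimately show "\<exists>z. (F has_real_derivative z) (at x) \<and> 0 \<le> z"
      by blast
  next
    show "continuous_on {r..T} F"
      unfolding F_def using r by (intro continuous_intros y_continuous_on) auto
  qed
  then have "(B * (y r)\<^sup>2 + 2 * energy T) * r ^ k \<le> 2 * energy T * T ^ k"
    by (simp add: F_def yT)
  moreover have "(y r)\<^sup>2 * r ^ k \<le> B * (y r)\<^sup>2 * r ^ k"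
    using beta_max_nonneg[of M] r by (intro mult_right_mono) (auto simp: B_def mult_le_cancel_right1)
  moreover have "0 \<le> 2 * energy T * r ^ k"
    using energy_nonneg r by simp
  ultimately have "(y r)\<^sup>2 * r ^ k \<le> 2 * energy T * T ^ k"
    by (simp add: algebra_simps)
  then show ?thesis
    using r by (simp add: power_divide pos_le_divide_eq)
qed

lemma scaled_sq_le:
  assumes T: "0 < T" "T < 1" "y T = 0" and k: "real k \<ge> beta_max M + 2"
    and s: "0 < d" "d \<le> s" "s \<le> 1"
  shows "(T powr \<kappa> * v (T * s))\<^sup>2 \<le> 2 * energy T / (d ^ k * d powr (2 * \<kappa>))"
proof -
  have "s powr (2 * \<kappa>) = (s powr \<kappa>)\<^sup>2"
    by (simp add: power2_eq_square powr_add[symmetric])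
  then have "s powr (2 * \<kappa>) * (T powr \<kappa> * v (T * s))\<^sup>2 = (y (T * s))\<^sup>2"
    using T s by (simp add: y_def powr_mult power_mult_distrib)
  also have "\<dots> \<le> 2 * energy T * (T / (T * s)) ^ k"
    using T s k by (intro y_sq_le_energy_decay) (auto simp: mult_le_cancel_left1)
  also have "\<dots> = 2 * energy T / s ^ k"
    using T by (simp add: power_divide)
  finally have "(T powr \<kappa> * v (T * s))\<^sup>2 \<le> 2 * energy T / (s ^ k * s powr (2 * \<kappa>))"
    using s by (simp add: field_simps)
  also have "\<dots> \<le> 2 * energy T / (d ^ k * d powr (2 * \<kappa>))"
    using s T energy_nonneg[of T] kappa_pos
    by (intro divide_left_mono mult_mono power_mono powr_mono2) auto
  finally show ?thesis .
qed

end

lemma nodal_zones_tz: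
  fixes u :: "real \<Rightarrow> real"
  assumes zones: "nodal_zones u m" and i: "i < m"
  shows "tz u 0 = 0" and "\<forall>k<i. tz u k < tz u (Suc k)" and "tz u i < 1"
    and "\<forall>k. 1 \<le> k \<and> k \<le> i \<longrightarrow> u (tz u k) = 0"
    and "\<forall>k<i. \<forall>r. tz u k < r \<and> r < tz u (Suc k) \<longrightarrow> u r \<noteq> 0"
proof -
  define L where "L = sorted_list_of_set (insert 0 (zeros01 u))"
  have tz: "tz u k = L ! k" for k
    by (simp add: tz_def L_def)
  have fin: "finite (zeros01 u)" and card: "card (zeros01 u) = m"
    using zones by (auto simp: nodal_zones_def)
  have "0 \<notin> zeros01 u"
    by (simp add: zeros01_def)
  then have len: "length L = Suc m"
    using fin card by (simp add: L_def)
  have set_L: "set L = insert 0 (zeros01 u)"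
    unfolding L_def using fin by (subst set_sorted_list_of_set) auto
  have sorted: "sorted_wrt (<) L"
    by (simp add: L_def)
  have range: "0 \<le> L ! k \<and> L ! k \<le> 1" if "k \<le> m" for k
    using nth_mem[of k L] that len set_L by (auto simp: zeros01_def)
  have less: "L ! k < L ! k'" if "k < k'" "k' \<le> m" for k k'
    using sorted_wrt_nth_less[OF sorted that(1)] that len by simp
  have L0: "L ! 0 = 0"
  proof -
    obtain j where j: "j < length L" "L ! j = 0"
      using set_L by (metis in_set_conv_nth insertI1)
    then show ?thesis
      using less[of 0 j] range[of 0] len by (cases "j = 0") auto
  qed
  have zero: "L ! k \<in> zeros01 u" if "1 \<le> k" "k \<le> m" for k
    using nth_mem[of k L] that len set_L less[of 0 k] L0 by auto
  show "tz u 0 = 0"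
    using L0 by (simp add: tz)
  show "\<forall>k<i. tz u k < tz u (Suc k)"
    using less i by (simp add: tz)
  show "tz u i < 1"
    using less[of i m] range[of m] i by (simp add: tz)
  show "\<forall>k. 1 \<le> k \<and> k \<le> i \<longrightarrow> u (tz u k) = 0"
    using zero i by (auto simp: tz zeros01_def)
  show "\<forall>k<i. \<forall>r. tz u k < r \<and> r < tz u (Suc k) \<longrightarrow> u r \<noteq> 0"
  proof (intro allI impI notI)
    fix k r assume k: "k < i" and r: "tz u k < r \<and> r < tz u (Suc k)" and ur: "u r = 0"
    then have "r \<in> zeros01 u"
      using range[of k] range[of "Suc k"] i by (auto simp: tz zeros01_def)
    then obtain j where j: "j < length L" "L ! j = r"
      using set_L by (metis in_set_conv_nth insertCI)
    have "sorted L"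
      by (simp add: L_def)
    then show False
      using sorted_nth_mono[of L j k] sorted_nth_mono[of L "Suc k" j] j r k i len
      by (cases "j \<le> k") (auto simp: tz)
  qed
qed

lemma wres_sq_le:
  fixes u :: "real \<Rightarrow> real" and i m k :: nat
  assumes M: "M > 2" and q: "1 < q" "q < (M + 2) / (M - 2)"
    and sol: "radial_sol M q u" and zones: "nodal_zones u m" and i: "1 \<le> i" "i < m"
    and small: "i * dissipation M q * (beta_max M + 3) \<le> 1 / 2"
    and k: "real k \<ge> beta_max M + 2" and s: "0 < d" "d \<le> s" "s \<le> 1"
  shows "(wres q u i s)\<^sup>2
    \<le> 4 * real i * dissipation M q * (beta_max M + 1) * peak_bound M q / (d ^ k * d powr (2 * emden_exp q))"
proof -
  obtain u' where "\<forall>t\<in>{0..1}. (u has_real_derivative u' t) (at t within {0..1})"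
    "\<forall>t\<in>{0<..<1}. ((\<lambda>s. s powr (M - 1) * u' s) has_real_derivative
       - (t powr (M - 1) * (\<bar>u t\<bar> powr (q - 1) * u t))) (at t)"
    using sol unfolding radial_sol_def by blast
  then interpret radial_ode M q u u'
    using M q by unfold_locales auto
  note t = nodal_zones_tz[OF zones i(2)]
  define T where "T = tz u i"
  have T: "0 < T" "T < 1" "y T = 0"
    using stepwise_less_imp_less[OF t(2), of 0 i] t(1,3,4) i by (auto simp: T_def y_def)
  define C where "C = i * \<alpha> * (beta_max M + 1) * peak_bound M q"
  have "energy T \<le> i * \<alpha> * (beta_max M + 3) * energy T + C"
    using energy_at_nodal_zero_le[OF t(1,2,3,4,5)] by (simp add: T_def C_def algebra_simps)
  also have "\<dots> \<le> energy T / 2 + C"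
    using mult_right_mono[OF small energy_nonneg[of T]] T by simp
  finally have "2 * energy T \<le> 4 * C"
    by simp
  then have "2 * energy T / (d ^ k * d powr (2 * \<kappa>)) \<le> 4 * C / (d ^ k * d powr (2 * \<kappa>))"
    using s by (intro divide_right_mono) auto
  with scaled_sq_le[OF T k s] show ?thesis
    by (simp add: wres_def T_def C_def emden_exp_def mult.assoc)
qed

lemma dissipation_tendsto_zero:
  fixes p :: "nat \<Rightarrow> real"
  assumes M: "M > 2" and p: "p \<longlonglongrightarrow> (M + 2) / (M - 2)"
  shows "(\<lambda>n. dissipation M (p n)) \<longlonglongrightarrow> 0"
proof -
  have "(M + 2) / (M - 2) - 1 \<noteq> 0"
    using M by (simp add: field_simps)
  then have "(\<lambda>n. dissipation M (p n)) \<longlonglongrightarrow> dissipation M ((M + 2) / (M - 2))"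
    unfolding dissipation_def emden_exp_def using p by (intro tendsto_intros) auto
  then show ?thesis
    using dissipation_critical[OF M] by simp
qed

lemma wres_bound_tendsto_zero:
  fixes p :: "nat \<Rightarrow> real" and i k :: nat
  assumes M: "M > 2" and p: "p \<longlonglongrightarrow> (M + 2) / (M - 2)" and d: "0 < d"
  shows "(\<lambda>n. 4 * real i * dissipation M (p n) * (beta_max M + 1) * peak_bound M (p n)
    / (d ^ k * d powr (2 * emden_exp (p n)))) \<longlonglongrightarrow> 0"
proof -
  define pM where "pM = (M + 2) / (M - 2)"
  have "pM - 1 \<noteq> 0" "pM + 1 \<noteq> 0"
    using M by (simp_all add: pM_def field_simps)
  have \<kappa>: "(\<lambda>n. emden_exp (p n)) \<longlonglongrightarrow> emden_exp pM"
    unfolding emden_exp_def using p \<open>pM - 1 \<noteq> 0\<close> by (intro tendsto_intros) (auto simp: pM_def)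
  moreover have "(\<lambda>n. peak_bound M (p n)) \<longlonglongrightarrow> peak_bound M pM"
    unfolding peak_bound_def using p \<kappa> \<open>pM + 1 \<noteq> 0\<close> beta_max_nonneg[of M]
    by (intro tendsto_intros) (auto simp: pM_def)
  ultimately have "(\<lambda>n. 4 * real i * dissipation M (p n) * (beta_max M + 1) * peak_bound M (p n)
      / (d ^ k * d powr (2 * emden_exp (p n))))
      \<longlonglongrightarrow> 4 * real i * 0 * (beta_max M + 1) * peak_bound M pM / (d ^ k * d powr (2 * emden_exp pM))"
    using d by (intro tendsto_intros dissipation_tendsto_zero[OF M p]) auto
  then show ?thesis
    by simp
qed

theorem lemma2p10:
  fixes M :: real and m i :: nat and v :: "real \<Rightarrow> real \<Rightarrow> real" and p :: "nat \<Rightarrow> real"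
  assumes "M > 2"
    and "m \<ge> 2"
    and sol: "\<forall>q\<in>{1<..<(M + 2) / (M - 2)}.
                radial_sol M q (v q) \<and> nodal_zones (v q) m \<and> v q 0 > 0"
    and "1 \<le> i" and "i \<le> m - 1"
    and "\<forall>n. p n \<in> {1<..<(M + 2) / (M - 2)}"
    and "p \<longlonglongrightarrow> (M + 2) / (M - 2)"
    and "(\<lambda>n. crit (v (p n)) (i - 1) / tz (v (p n)) i) \<longlonglongrightarrow> 0"
    and "filterlim (\<lambda>n. tz (v (p n)) i * Mtil (p n) (v (p n)) (i - 1)) at_top sequentially"
  shows "\<forall>\<delta>. 0 < \<delta> \<and> \<delta> < 1 \<longrightarrow>
           uniform_limit {1 - \<delta>..1} (\<lambda>n r. wres (p n) (v (p n)) i r) (\<lambda>r. 0) sequentially"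
proof (intro allI impI)
  fix \<delta> :: real assume \<delta>: "0 < \<delta> \<and> \<delta> < 1"
  define k where "k = nat \<lceil>beta_max M + 2\<rceil>"
  have k: "real k \<ge> beta_max M + 2"
    unfolding k_def by (rule real_nat_ceiling_ge)
  have "i < m"
    using assms(4,5) by linarith
  have "(\<lambda>n. i * dissipation M (p n) * (beta_max M + 3)) \<longlonglongrightarrow> 0"
    by (intro tendsto_mult_left_zero tendsto_mult_right_zero dissipation_tendsto_zero assms(1,7))
  from order_tendstoD(2)[OF this, of "1 / 2"]
  have "\<forall>\<^sub>F n in sequentially. i * dissipation M (p n) * (beta_max M + 3) \<le> 1 / 2"
    by (auto elim: eventually_mono)
  then have "\<forall>\<^sub>F n in sequentially. \<forall>s\<in>{1 - \<delta>..1}. (wres (p n) (v (p n)) i s)\<^sup>2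
      \<le> 4 * real i * dissipation M (p n) * (beta_max M + 1) * peak_bound M (p n)
        / ((1 - \<delta>) ^ k * (1 - \<delta>) powr (2 * emden_exp (p n)))"
  proof eventually_elim
    case (elim n)
    have q: "1 < p n" "p n < (M + 2) / (M - 2)"
      using assms(6) by auto
    with sol show ?case
      using wres_sq_le[OF assms(1) q _ _ assms(4) \<open>i < m\<close> elim k] \<delta> by auto
  qed
  moreover have "1 - \<delta> > 0"
    using \<delta> by simp
  ultimately show "uniform_limit {1 - \<delta>..1} (\<lambda>n r. wres (p n) (v (p n)) i r) (\<lambda>r. 0) sequentially"
    by (rule uniform_limit_zero_of_sq_le[OF _ wres_bound_tendsto_zero[OF assms(1,7)]])
qed

end
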